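(* Assume there are constants $\gamma_t\ge 0$ ($t=0,\dots,T-1$) with $|C_t(x)-C_t(y)|\le\gamma_t|x-y|$ for all $x,y$. For every $t=0,1,\dots,T-2$ and every $x$ with $z_{k-1}<x\le z_k$, $z_k\in Z_\theta$, one has $\alpha A_{t+1}(x)\le 2\bar\psi_t(\theta,z_k)-2\gamma_t\theta$.
   Context: Model. Fix an integer horizon $T\ge 2$, a discount factor $\alpha\in(0,1]$, and for $t=0,\dots,T-1$: unit ordering costs $c_t\in\mathbb R$, a salvage coefficient $c_T\in\mathbb R$, setup costs $K_t\ge 0$, functions $G_t:\mathbb R\to\mathbb R$, and independent nonnegative random demands $D_0,\dots,D_{T-1}$ with right-continuous distribution functions $F_t$ and finite means; all expectations appearing are assumed finite. Put $C_t(y)=(c_t-\alpha c_{t+1})y+G_t(y)+\alpha c_{t+1}E[D_t]$. Standing assumptions: (i) each $C_t$ is convex with $C_t(y)\to+\infty$ as $|y|\to\infty$; (ii) $K_t\ge \alpha K_{t+1}$ for $t=0,\dots,T-2$. Grid construction. Fix $\theta>0$, $z_m=m\theta$, $Z_\theta=\{z_m:m\in\mathbb Z\}$, $f_t(n)=F_t(z_{n+1})-F_t(z_n)$ ($n\ge -1$). $C^m_t=\min\{y: C_t(y)=\min_x C_t(x)\}$; with $z_{n_0}<C^m_t\le z_{n_0+1}$, $S^U_t=\min\{z_m\in Z_\theta: z_m\ge C^m_t,\ C_t(z_m)>C_t(z_{n_0})+K_t\}$. $s_{T-1}$ is a point with $s_{T-1}\le C^m_{T-1}$, $C_{T-1}(s_{T-1})=C_{T-1}(C^m_{T-1})+K_{T-1}$;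 $\bar I_{T-1}=s_{T-1}$. For $t=T-2,\dots,0$: $I_t=\max\{z_m\in Z_\theta: z_m<\min(\bar I_{t+1}-\theta,C^m_t)\}$, $\bar I_t=\max\{z_m\in Z_\theta: z_m\le I_t,\ C_t(z_m)>C_t(I_t)+K_t\}+\theta$. $H_{T-1}=C_{T-1}$, $S_{T-1}=C^m_{T-1}$; $V_t(y)=H_t(S_t)+K_t$ for $y<s_t$, $V_t(y)=H_t(y)$ for $y\ge s_t$. For $t=T-2,\dots,0$: $H_t(y)=C_t(y)+\alpha\sum_{n=-1}^\infty V_{t+1}(y-z_n)f_t(n)$; $S_t=\max\{z_m\in Z_\theta: I_t\le z_m\le S^U_t,\ H_t(z_m)=\min\{H_t(z_n):z_n\in Z_\theta, I_t\le z_n\le S^U_t\}\}$; $s_t=S_t$ if $K_t=0$, else $s_t=\min\{z_m\in Z_\theta:\bar I_t\le z_m\le S_t,\ H_t(z_m)\le H_t(S_t)+K_t\}$. For $t=1,\dots,T-1$, $A_t(x)=E[V_t(x-D_{t-1})]-\sum_{n=-1}^{\infty}V_t(x-z_n)f_{t-1}(n)$. Upper estimate functions. $\bar\psi_{T-1}(x,y)=\gamma_{T-1}x$; $\bar\varphi_{T-1}(x,y)=0$ if $y<s_{T-1}$ and $=\gamma_{T-1}x$ if $y\ge s_{T-1}$. For $t=0,\dots,T-2$, with $n$ the integer such that $z_{n-1}\le y-s_{t+1}<z_n$: $\bar\psi_t(x,y)=\gamma_tx$ if $y<s_{t+1}-\theta$, else $\bar\psi_t(x,y)=\gamma_tx+\alpha\sum_{m=-1}^{n-1}\bar\varphi_{t+1}(x,y-z_m)f_t(m)$;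 $\bar\varphi_t(x,y)=0$ if $y<s_t$, $=\bar\psi_t(y-s_t+\theta,y)$ if $y\ge s_t$ and $y-x<s_t$, $=\bar\psi_t(x,y)$ if $y\ge s_t$ and $y-x\ge s_t$. *)

theory Defs
  imports "HOL-Probability.Probability"
begin

record 'a invmodel =
  hor    :: nat
  disc   :: real
  cost   :: "nat \<Rightarrow> real"
  setupK  :: "nat \<Rightarrow> real"
  Gf     :: "nat \<Rightarrow> real \<Rightarrow> real"
  pspace :: "'a measure"
  dem    :: "nat \<Rightarrow> 'a \<Rightarrow> real"

definition zg :: "real \<Rightarrow> int \<Rightarrow> real" where
  "zg \<theta> m = real_of_int m * \<theta>"

definition Fd :: "'a invmodel \<Rightarrow> nat \<Rightarrow> real \<Rightarrow> real" where
  "Fd P t x = measure (pspace P) {\<omega> \<in> space (pspace P). dem P t \<omega> \<le> x}"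

definition fg :: "'a invmodel \<Rightarrow> real \<Rightarrow> nat \<Rightarrow> int \<Rightarrow> real" where
  "fg P \<theta> t n = Fd P t (zg \<theta> (n + 1)) - Fd P t (zg \<theta> n)"

definition Cf :: "'a invmodel \<Rightarrow> nat \<Rightarrow> real \<Rightarrow> real" where
  "Cf P t y = (cost P t - disc P * cost P (Suc t)) * y + Gf P t y
      + disc P * cost P (Suc t) * (\<integral>\<omega>. dem P t \<omega> \<partial>pspace P)"

definition Cm :: "'a invmodel \<Rightarrow> nat \<Rightarrow> real" where
  "Cm P t = Inf {y. \<forall>x. Cf P t y \<le> Cf P t x}"

definition n0 :: "'a invmodel \<Rightarrow> real \<Rightarrow> nat \<Rightarrow> int" where
  "n0 P \<theta> t = (THE n. zg \<theta> n < Cm P t \<and> Cm P t \<le> zg \<theta> (n + 1))"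

definition SU :: "'a invmodel \<Rightarrow> real \<Rightarrow> nat \<Rightarrow> real" where
  "SU P \<theta> t = Inf {zg \<theta> m | m. Cm P t \<le> zg \<theta> m \<and>
        Cf P t (zg \<theta> m) > Cf P t (zg \<theta> (n0 P \<theta> t)) + setupK P t}"

definition sT :: "'a invmodel \<Rightarrow> real" where
  "sT P = (THE s. s \<le> Cm P (hor P - 1) \<and>
      Cf P (hor P - 1) s = Cf P (hor P - 1) (Cm P (hor P - 1)) + setupK P (hor P - 1))"

text \<open>I_t computed from a given value b = bar I_{t+1}.\<close>
definition Ifrom :: "'a invmodel \<Rightarrow> real \<Rightarrow> nat \<Rightarrow> real \<Rightarrow> real" where
  "Ifrom P \<theta> t b = Sup {zg \<theta> m | m. zg \<theta> m < min (b - \<theta>) (Cm P t)}"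

definition Ibarfrom :: "'a invmodel \<Rightarrow> real \<Rightarrow> nat \<Rightarrow> real \<Rightarrow> real" where
  "Ibarfrom P \<theta> t I = Sup {zg \<theta> m | m. zg \<theta> m \<le> I \<and> Cf P t (zg \<theta> m) > Cf P t I + setupK P t} + \<theta>"

text \<open>Backward recursion: Ibar_aux j = bar I_{T-1-j}.\<close>
primrec Ibar_aux :: "'a invmodel \<Rightarrow> real \<Rightarrow> nat \<Rightarrow> real" where
  "Ibar_aux P \<theta> 0 = sT P"
| "Ibar_aux P \<theta> (Suc j) =
     (let t = hor P - 2 - j in Ibarfrom P \<theta> t (Ifrom P \<theta> t (Ibar_aux P \<theta> j)))"

definition Ibar :: "'a invmodel \<Rightarrow> real \<Rightarrow> nat \<Rightarrow> real" where
  "Ibar P \<theta> t = Ibar_aux P \<theta> (hor P - 1 - t)"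

definition Iv :: "'a invmodel \<Rightarrow> real \<Rightarrow> nat \<Rightarrow> real" where
  "Iv P \<theta> t = Ifrom P \<theta> t (Ibar P \<theta> (Suc t))"

definition Vfrom :: "(real \<Rightarrow> real) \<Rightarrow> real \<Rightarrow> real \<Rightarrow> real \<Rightarrow> real \<Rightarrow> real" where
  "Vfrom H S s K y = (if y < s then H S + K else H y)"

text \<open>Backward recursion: HSs_aux j = (H_t, S_t, s_t) with t = T-1-j.
  The series sum_{n=-1}^infty is written as a series over m :: nat with n = m - 1.\<close>
primrec HSs_aux :: "'a invmodel \<Rightarrow> real \<Rightarrow> nat \<Rightarrow> (real \<Rightarrow> real) \<times> real \<times> real" where
  "HSs_aux P \<theta> 0 = (Cf P (hor P - 1), Cm P (hor P - 1), sT P)"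
| "HSs_aux P \<theta> (Suc j) =
    (case HSs_aux P \<theta> j of (H', S', s') \<Rightarrow>
      (let t = hor P - 2 - j;
           V' = Vfrom H' S' s' (setupK P (Suc t));
           H = (\<lambda>y. Cf P t y + disc P *
                 (\<Sum>m. V' (y - zg \<theta> (int m - 1)) * fg P \<theta> t (int m - 1)));
           I = Iv P \<theta> t;
           U = SU P \<theta> t;
           S = Sup {zg \<theta> m | m. I \<le> zg \<theta> m \<and> zg \<theta> m \<le> U \<and>
                  (\<forall>n. I \<le> zg \<theta> n \<and> zg \<theta> n \<le> U \<longrightarrow> H (zg \<theta> m) \<le> H (zg \<theta> n))};
           s = (if setupK P t = 0 then S
                else Inf {zg \<theta> m | m. Ibar P \<theta> t \<le> zg \<theta> m \<and> zg \<theta> m \<le> S \<and>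
                           H (zg \<theta> m) \<le> H S + setupK P t})
       in (H, S, s)))"

definition Hf :: "'a invmodel \<Rightarrow> real \<Rightarrow> nat \<Rightarrow> real \<Rightarrow> real" where
  "Hf P \<theta> t = fst (HSs_aux P \<theta> (hor P - 1 - t))"

definition Sv :: "'a invmodel \<Rightarrow> real \<Rightarrow> nat \<Rightarrow> real" where
  "Sv P \<theta> t = fst (snd (HSs_aux P \<theta> (hor P - 1 - t)))"

definition sv :: "'a invmodel \<Rightarrow> real \<Rightarrow> nat \<Rightarrow> real" where
  "sv P \<theta> t = snd (snd (HSs_aux P \<theta> (hor P - 1 - t)))"

definition Vf :: "'a invmodel \<Rightarrow> real \<Rightarrow> nat \<Rightarrow> real \<Rightarrow> real" where
  "Vf P \<theta> t = Vfrom (Hf P \<theta> t) (Sv P \<theta> t) (sv P \<theta> t) (setupK P t)"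

definition Af :: "'a invmodel \<Rightarrow> real \<Rightarrow> nat \<Rightarrow> real \<Rightarrow> real" where
  "Af P \<theta> t x = (\<integral>\<omega>. Vf P \<theta> t (x - dem P (t - 1) \<omega>) \<partial>pspace P)
      - (\<Sum>m. Vf P \<theta> t (x - zg \<theta> (int m - 1)) * fg P \<theta> (t - 1) (int m - 1))"

text \<open>bar psi_t computed from bar phi_{t+1} (t \<le> T-2).\<close>
definition psifrom :: "'a invmodel \<Rightarrow> real \<Rightarrow> (nat \<Rightarrow> real) \<Rightarrow> nat
     \<Rightarrow> (real \<Rightarrow> real \<Rightarrow> real) \<Rightarrow> real \<Rightarrow> real \<Rightarrow> real" where
  "psifrom P \<theta> \<gamma> t \<phi> x y =
    (if y < sv P \<theta> (Suc t) - \<theta> then \<gamma> t * x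
     else \<gamma> t * x + disc P *
       (\<Sum>m \<in> {-1 .. (THE n. zg \<theta> (n - 1) \<le> y - sv P \<theta> (Suc t) \<and>
                                y - sv P \<theta> (Suc t) < zg \<theta> n) - 1}.
           \<phi> x (y - zg \<theta> m) * fg P \<theta> t m))"

text \<open>bar phi_t computed from bar psi_t (t \<le> T-2).\<close>
definition phifrom :: "real \<Rightarrow> real \<Rightarrow> (real \<Rightarrow> real \<Rightarrow> real) \<Rightarrow> real \<Rightarrow> real \<Rightarrow> real" where
  "phifrom \<theta> st \<psi> x y =
    (if y < st then 0 else if y - x < st then \<psi> (y - st + \<theta>) y else \<psi> x y)"

text \<open>Backward recursion: phi_aux j = bar phi_{T-1-j}.\<close>
primrec phi_aux :: "'a invmodel \<Rightarrow> real \<Rightarrow> (nat \<Rightarrow> real) \<Rightarrow> nat \<Rightarrow> real \<Rightarrow> real \<Rightarrow> real" where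
  "phi_aux P \<theta> \<gamma> 0 =
     (\<lambda>x y. if y < sv P \<theta> (hor P - 1) then 0 else \<gamma> (hor P - 1) * x)"
| "phi_aux P \<theta> \<gamma> (Suc j) =
     (let t = hor P - 2 - j in
        phifrom \<theta> (sv P \<theta> t) (psifrom P \<theta> \<gamma> t (phi_aux P \<theta> \<gamma> j)))"

definition phibar :: "'a invmodel \<Rightarrow> real \<Rightarrow> (nat \<Rightarrow> real) \<Rightarrow> nat \<Rightarrow> real \<Rightarrow> real \<Rightarrow> real" where
  "phibar P \<theta> \<gamma> t = phi_aux P \<theta> \<gamma> (hor P - 1 - t)"

definition psibar :: "'a invmodel \<Rightarrow> real \<Rightarrow> (nat \<Rightarrow> real) \<Rightarrow> nat \<Rightarrow> real \<Rightarrow> real \<Rightarrow> real" where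
  "psibar P \<theta> \<gamma> t = (if hor P - 1 \<le> t then (\<lambda>x y. \<gamma> t * x)
                       else psifrom P \<theta> \<gamma> t (phibar P \<theta> \<gamma> (Suc t)))"

end

theory Submission
  imports Defs
begin

text \<open>On the event \<open>z\<^sub>n < D\<^sub>t \<le> z\<^sub>n\<^sub>+\<^sub>1\<close> the points \<open>x - D\<^sub>t\<close> and \<open>x - z\<^sub>n\<close> lie in adjacent grid
  cells, so \<open>A\<^sub>t\<^sub>+\<^sub>1(x)\<close>, the error of discretising \<open>E[V\<^sub>t\<^sub>+\<^sub>1(x - D\<^sub>t)]\<close> on the grid, is at most
  twice the oscillation of \<open>V\<^sub>t\<^sub>+\<^sub>1\<close> on the cell of \<open>x - z\<^sub>n\<close>, summed against \<open>f\<^sub>t(n)\<close>; far to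
  the left \<open>V\<^sub>t\<^sub>+\<^sub>1\<close> is constant, so only finitely many cells contribute.
  That \<open>V\<^sub>t\<close> oscillates by at most \<open>\<phi>\<^sub>t(\<theta>, z\<^sub>j)\<close> on \<open>[z\<^sub>j\<^sub>-\<^sub>1, z\<^sub>j]\<close> (the upper estimate
  \<open>\<phi>\<close> with a bar in the paper), and that \<open>j \<mapsto> \<phi>\<^sub>t(\<theta>, z\<^sub>j)\<close> is nonnegative and nondecreasing,
  follows by backward induction on \<open>t\<close>: above \<open>s\<^sub>t\<close> we have \<open>V\<^sub>t = H\<^sub>t\<close>, whose oscillation is that
  of \<open>C\<^sub>t\<close> (at most \<open>\<gamma>\<^sub>t\<theta>\<close>) plus \<open>\<alpha>\<close> times the averaged oscillation of \<open>V\<^sub>t\<^sub>+\<^sub>1\<close>, which is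
  \<open>\<psi>\<^sub>t(\<theta>, z\<^sub>j)\<close>; below \<open>s\<^sub>t\<close> it is constant; and the jump at \<open>s\<^sub>t\<close> is controlled by
  \<open>H\<^sub>t(S\<^sub>t) + K\<^sub>t < H\<^sub>t(s\<^sub>t - \<theta>)\<close>. Summing the cell bounds gives
  \<open>\<alpha> A\<^sub>t\<^sub>+\<^sub>1(x) \<le> 2\<alpha> \<Sum>\<^sub>n \<phi>\<^sub>t\<^sub>+\<^sub>1(\<theta>, z\<^sub>k - z\<^sub>n) f\<^sub>t(n) = 2(\<psi>\<^sub>t(\<theta>, z\<^sub>k) - \<gamma>\<^sub>t\<theta>)\<close>.\<close>

lemma zg_diff: "zg \<theta> (a - b) = zg \<theta> a - zg \<theta> b"
  and zg_succ: "zg \<theta> (a + 1) = zg \<theta> a + \<theta>"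
  and zg_pred: "zg \<theta> (a - 1) = zg \<theta> a - \<theta>"
  by (simp_all add: zg_def algebra_simps)

lemma zg_le_iff: "0 < \<theta> \<Longrightarrow> zg \<theta> a \<le> zg \<theta> b \<longleftrightarrow> a \<le> b"
  and zg_less_iff: "0 < \<theta> \<Longrightarrow> zg \<theta> a < zg \<theta> b \<longleftrightarrow> a < b"
  by (simp_all add: zg_def)

lemma zg_of_nat_pred_ge: "0 < \<theta> \<Longrightarrow> - \<theta> \<le> zg \<theta> (int m - 1)"
  by (simp add: zg_def algebra_simps)

lemma zg_floor_le: "0 < \<theta> \<Longrightarrow> zg \<theta> \<lfloor>v / \<theta>\<rfloor> \<le> v"
  unfolding zg_def by (metis floor_divide_lower)

lemma less_zg_floor_succ: "0 < \<theta> \<Longrightarrow> v < zg \<theta> (\<lfloor>v / \<theta>\<rfloor> + 1)"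
  unfolding zg_def by (metis floor_divide_upper of_int_1 of_int_add)

lemma le_zg_ceiling: "0 < \<theta> \<Longrightarrow> v \<le> zg \<theta> \<lceil>v / \<theta>\<rceil>"
  unfolding zg_def by (metis ceiling_divide_upper)

lemma zg_ceiling_pred_less: "0 < \<theta> \<Longrightarrow> zg \<theta> (\<lceil>v / \<theta>\<rceil> - 1) < v"
  unfolding zg_def by (metis ceiling_divide_lower of_int_1 of_int_diff)

lemma the_grid_cell:
  assumes "0 < \<theta>"
  shows "(THE n. zg \<theta> (n - 1) \<le> w \<and> w < zg \<theta> n) = \<lfloor>w / \<theta>\<rfloor> + 1"
proof (rule the_equality)
  show "zg \<theta> (\<lfloor>w / \<theta>\<rfloor> + 1 - 1) \<le> w \<and> w < zg \<theta> (\<lfloor>w / \<theta>\<rfloor> + 1)"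
    using zg_floor_le less_zg_floor_succ assms by simp
next
  fix n assume n: "zg \<theta> (n - 1) \<le> w \<and> w < zg \<theta> n"
  then have "zg \<theta> (n - 1) < zg \<theta> (\<lfloor>w / \<theta>\<rfloor> + 1)" "zg \<theta> \<lfloor>w / \<theta>\<rfloor> < zg \<theta> n"
    using zg_floor_le[OF assms, of w] less_zg_floor_succ[OF assms, of w] by linarith+
  then show "n = \<lfloor>w / \<theta>\<rfloor> + 1"
    using assms by (simp add: zg_less_iff)
qed

lemma int_bounded_above_has_greatest:
  fixes Q :: "int \<Rightarrow> bool"
  assumes "Q m\<^sub>0" "\<And>m. Q m \<Longrightarrow> m \<le> B"
  shows "\<exists>m. Q m \<and> (\<forall>n. Q n \<longrightarrow> n \<le> m)"
proof -
  let ?S = "{m. Q m \<and> m\<^sub>0 \<le> m}"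
  have "finite ?S" by (rule finite_subset[of _ "{m\<^sub>0..B}"]) (use assms in auto)
  moreover have "m\<^sub>0 \<in> ?S" using assms by auto
  ultimately show ?thesis
    by (intro exI[of _ "Max ?S"]) (metis (mono_tags, lifting) Max_ge Max_in empty_iff
        mem_Collect_eq nle_le order_trans)
qed

lemma int_bounded_below_has_least:
  fixes Q :: "int \<Rightarrow> bool"
  assumes "Q m\<^sub>0" "\<And>m. Q m \<Longrightarrow> B \<le> m"
  shows "\<exists>m. Q m \<and> (\<forall>n. Q n \<longrightarrow> m \<le> n)"
proof -
  obtain m where "Q (- m)" "\<forall>n. Q (- n) \<longrightarrow> n \<le> m"
    using int_bounded_above_has_greatest[of "\<lambda>m. Q (- m)" "- m\<^sub>0" "- B"] assms by fastforce
  then show ?thesis by (intro exI[of _ "- m"]) (metis minus_minus neg_le_iff_le)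
qed

lemma grid_Sup_attained:
  assumes "0 < \<theta>" "Q m\<^sub>0" "\<And>m. Q m \<Longrightarrow> zg \<theta> m \<le> B"
  shows "\<exists>m. Q m \<and> Sup {zg \<theta> m | m. Q m} = zg \<theta> m \<and> (\<forall>n. Q n \<longrightarrow> n \<le> m)"
proof -
  have "m \<le> \<lceil>B / \<theta>\<rceil>" if "Q m" for m
    using assms(3)[OF that] le_zg_ceiling[OF assms(1), of B] assms(1)
    by (metis order_trans zg_le_iff)
  then obtain m where m: "Q m" "\<forall>n. Q n \<longrightarrow> n \<le> m"
    using int_bounded_above_has_greatest[of Q m\<^sub>0] assms(2) by blast
  have "Sup {zg \<theta> m | m. Q m} = zg \<theta> m"
    by (rule cSup_eq_maximum) (use m assms(1) in \<open>auto simp: zg_le_iff\<close>)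
  with m show ?thesis by blast
qed

lemma grid_Inf_attained:
  assumes "0 < \<theta>" "Q m\<^sub>0" "\<And>m. Q m \<Longrightarrow> B \<le> zg \<theta> m"
  shows "\<exists>m. Q m \<and> Inf {zg \<theta> m | m. Q m} = zg \<theta> m \<and> (\<forall>n. Q n \<longrightarrow> m \<le> n)"
proof -
  have "\<lfloor>B / \<theta>\<rfloor> \<le> m" if "Q m" for m
    using assms(3)[OF that] zg_floor_le[OF assms(1), of B] assms(1)
    by (metis order_trans zg_le_iff)
  then obtain m where m: "Q m" "\<forall>n. Q n \<longrightarrow> m \<le> n"
    using int_bounded_below_has_least[of Q m\<^sub>0] assms(2) by blast
  have "Inf {zg \<theta> m | m. Q m} = zg \<theta> m"
    by (rule cInf_eq_minimum) (use m assms(1) in \<open>auto simp: zg_le_iff\<close>)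
  with m show ?thesis by blast
qed

lemma grid_tail_index:
  assumes "0 < \<theta>"
  obtains L where "-2 \<le> L" "\<And>m. L < m \<Longrightarrow> y - zg \<theta> m < s"
proof
  show "-2 \<le> max (-2) \<lfloor>(y - s) / \<theta>\<rfloor>" by simp
  fix m assume "max (-2) \<lfloor>(y - s) / \<theta>\<rfloor> < m"
  then have "zg \<theta> (\<lfloor>(y - s) / \<theta>\<rfloor> + 1) \<le> zg \<theta> m" using assms by (simp add: zg_le_iff)
  then show "y - zg \<theta> m < s" using less_zg_floor_succ[OF assms, of "y - s"] by linarith
qed

lemma sum_shift_nat_int:
  fixes g :: "int \<Rightarrow> real"
  shows "(\<Sum>m<N. g (int m - 1)) = (\<Sum>j\<in>{-1..int N - 2}. g j)"
proof (induction N)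
  case (Suc N)
  have "{-1..int (Suc N) - 2} = insert (int N - 1) {-1..int N - 2}" by auto
  with Suc show ?case by (simp add: add.commute)
qed simp

lemma HSs_aux_step:
  assumes "Suc u < hor P"
  shows "HSs_aux P \<theta> (hor P - 1 - u) =
    (let H = (\<lambda>y. Cf P u y + disc P *
                 (\<Sum>m. Vf P \<theta> (Suc u) (y - zg \<theta> (int m - 1)) * fg P \<theta> u (int m - 1)));
         S = Sup {zg \<theta> m | m. Iv P \<theta> u \<le> zg \<theta> m \<and> zg \<theta> m \<le> SU P \<theta> u \<and>
                  (\<forall>n. Iv P \<theta> u \<le> zg \<theta> n \<and> zg \<theta> n \<le> SU P \<theta> u \<longrightarrow> H (zg \<theta> m) \<le> H (zg \<theta> n))}
     in (H, S, if setupK P u = 0 then S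
                else Inf {zg \<theta> m | m. Ibar P \<theta> u \<le> zg \<theta> m \<and> zg \<theta> m \<le> S \<and>
                           H (zg \<theta> m) \<le> H S + setupK P u}))"
proof -
  have "hor P - 1 - u = Suc (hor P - 1 - Suc u)" "hor P - 2 - (hor P - 1 - Suc u) = u"
    using assms by arith+
  then show ?thesis
    by (simp add: Let_def Vf_def Hf_def Sv_def sv_def split: prod.split)
qed

lemma Hf_step: "Suc u < hor P \<Longrightarrow> Hf P \<theta> u = (\<lambda>y. Cf P u y + disc P *
    (\<Sum>m. Vf P \<theta> (Suc u) (y - zg \<theta> (int m - 1)) * fg P \<theta> u (int m - 1)))"
  unfolding Hf_def by (subst HSs_aux_step) (auto simp: Let_def)

lemma Sv_step: "Suc u < hor P \<Longrightarrow> Sv P \<theta> u =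
   Sup {zg \<theta> m | m. Iv P \<theta> u \<le> zg \<theta> m \<and> zg \<theta> m \<le> SU P \<theta> u \<and>
     (\<forall>n. Iv P \<theta> u \<le> zg \<theta> n \<and> zg \<theta> n \<le> SU P \<theta> u \<longrightarrow> Hf P \<theta> u (zg \<theta> m) \<le> Hf P \<theta> u (zg \<theta> n))}"
  unfolding Sv_def by (subst HSs_aux_step) (auto simp: Let_def Hf_step)

lemma sv_step: "Suc u < hor P \<Longrightarrow> sv P \<theta> u =
   (if setupK P u = 0 then Sv P \<theta> u
    else Inf {zg \<theta> m | m. Ibar P \<theta> u \<le> zg \<theta> m \<and> zg \<theta> m \<le> Sv P \<theta> u \<and>
                           Hf P \<theta> u (zg \<theta> m) \<le> Hf P \<theta> u (Sv P \<theta> u) + setupK P u})"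
  unfolding sv_def by (subst HSs_aux_step) (auto simp: Let_def Hf_step Sv_step)

lemma Ibar_step: "Suc u < hor P \<Longrightarrow> Ibar P \<theta> u = Ibarfrom P \<theta> u (Iv P \<theta> u)"
proof -
  assume "Suc u < hor P"
  then have "hor P - 1 - u = Suc (hor P - 1 - Suc u)" "hor P - 2 - (hor P - 1 - Suc u) = u"
    by arith+
  then show ?thesis by (simp add: Ibar_def Iv_def)
qed

lemma phibar_step: "Suc u < hor P \<Longrightarrow> phibar P \<theta> \<gamma> u = phifrom \<theta> (sv P \<theta> u) (psibar P \<theta> \<gamma> u)"
proof -
  assume "Suc u < hor P"
  then have "hor P - 1 - u = Suc (hor P - 1 - Suc u)" "hor P - 2 - (hor P - 1 - Suc u) = u"
    "\<not> hor P - 1 \<le> u"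
    by arith+
  then show ?thesis by (simp add: phibar_def psibar_def)
qed

lemma psibar_step: "Suc u < hor P \<Longrightarrow> psibar P \<theta> \<gamma> u = psifrom P \<theta> \<gamma> u (phibar P \<theta> \<gamma> (Suc u))"
  unfolding psibar_def by auto

lemma recursion_last:
  "Hf P \<theta> (hor P - 1) = Cf P (hor P - 1)" "Sv P \<theta> (hor P - 1) = Cm P (hor P - 1)"
  "sv P \<theta> (hor P - 1) = sT P" "Ibar P \<theta> (hor P - 1) = sT P"
  "phibar P \<theta> \<gamma> (hor P - 1) = (\<lambda>x y. if y < sT P then 0 else \<gamma> (hor P - 1) * x)"
  by (simp_all add: Hf_def Sv_def sv_def Ibar_def phibar_def)

lemma Vf_below: "y < sv P \<theta> i \<Longrightarrow> Vf P \<theta> i y = Hf P \<theta> i (Sv P \<theta> i) + setupK P i"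
  and Vf_above: "\<not> y < sv P \<theta> i \<Longrightarrow> Vf P \<theta> i y = Hf P \<theta> i y"
  by (simp_all add: Vf_def Vfrom_def)

section \<open>Convex coercive functions\<close>

lemma coercive_eventually_ge:
  fixes f :: "real \<Rightarrow> real"
  assumes "filterlim f at_top at_infinity"
  obtains R where "R > 0" "\<And>x. R \<le> \<bar>x\<bar> \<Longrightarrow> B \<le> f x"
proof -
  have "eventually (\<lambda>x. B \<le> f x) at_infinity" using assms by (simp add: filterlim_at_top)
  then obtain b where "\<forall>x. b \<le> norm x \<longrightarrow> B \<le> f x" by (auto simp: eventually_at_infinity)
  then show thesis by (intro that[of "max b 1"]) auto
qed

context
  fixes f :: "real \<Rightarrow> real"
  assumes conv: "convex_on UNIV f" and coer: "filterlim f at_top at_infinity"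
begin

lemma convex_coercive_continuous: "continuous_on S f"
  using convex_on_continuous[OF open_UNIV conv] continuous_on_subset by blast

lemma convex_coercive_least_minimizer:
  defines "c \<equiv> Inf {y. \<forall>x. f y \<le> f x}"
  shows "f c \<le> f x" and "y < c \<Longrightarrow> f c < f y"
proof -
  obtain R where R: "R > 0" "\<And>x. R \<le> \<bar>x\<bar> \<Longrightarrow> f 0 + 1 \<le> f x"
    using coercive_eventually_ge[OF coer] by blast
  obtain x\<^sub>0 where x\<^sub>0: "x\<^sub>0 \<in> cball 0 R" "\<forall>y\<in>cball 0 R. f x\<^sub>0 \<le> f y"
    using continuous_attains_inf[of "cball (0::real) R" f] convex_coercive_continuous R(1) by auto
  have "f x\<^sub>0 \<le> f 0" using x\<^sub>0 R(1) by simp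
  have "f x\<^sub>0 \<le> f x" for x
  proof (cases "\<bar>x\<bar> \<le> R")
    case False
    with R(2)[of x] \<open>f x\<^sub>0 \<le> f 0\<close> show ?thesis by simp
  qed (use x\<^sub>0 in \<open>auto simp: dist_real_def\<close>)
  then have ne: "{y. \<forall>x. f y \<le> f x} \<noteq> {}" by blast
  have bdd: "bdd_below {y. \<forall>x. f y \<le> f x}"
  proof (rule bdd_belowI[of _ "-R"])
    fix y assume "y \<in> {y. \<forall>x. f y \<le> f x}"
    then have "f y \<le> f 0" by auto
    with R(2)[of y] show "-R \<le> y" by linarith
  qed
  have "closed {y. \<forall>x. f y \<le> f x}"
    unfolding Collect_all_eq
    by (intro closed_INT ballI closed_Collect_le convex_coercive_continuous continuous_on_const)
  then have min: "c \<in> {y. \<forall>x. f y \<le> f x}"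
    unfolding c_def by (rule closed_contains_Inf[OF ne bdd])
  then show "f c \<le> f x" by auto
  assume "y < c"
  then have "y \<notin> {y. \<forall>x. f y \<le> f x}" unfolding c_def using cInf_lower[OF _ bdd, of y] by force
  then obtain x where "f x < f y" by (auto simp: not_le)
  moreover have "f c \<le> f x" using min by simp
  ultimately show "f c < f y" by linarith
qed

lemma convex_coercive_strict_antimono_left:
  defines "c \<equiv> Inf {y. \<forall>x. f y \<le> f x}"
  assumes "a < b" "b \<le> c"
  shows "f b < f a"
proof (cases "b = c")
  case True
  with assms convex_coercive_least_minimizer(2) show ?thesis by (simp add: c_def)
next
  case False
  define l where "l = (c - b) / (c - a)"
  have l: "0 < l" "l < 1" using assms False by (auto simp: l_def field_simps)
  have "l * a + (1 - l) * c = c - l * (c - a)" by (simp add: algebra_simps)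
  also have "\<dots> = b" using assms by (simp add: l_def)
  finally have "b = l * a + (1 - l) * c" by simp
  then have "f b \<le> l * f a + (1 - l) * f c"
    using convex_onD[OF conv, of "1 - l" a c] l by simp
  also have "\<dots> < l * f a + (1 - l) * f a"
    using convex_coercive_least_minimizer(2)[of a] assms l by (simp add: c_def)
  finally show ?thesis by (simp add: algebra_simps)
qed

lemma convex_coercive_level_left:
  defines "c \<equiv> Inf {y. \<forall>x. f y \<le> f x}"
  assumes "0 \<le> K"
  shows "\<exists>!s. s \<le> c \<and> f s = f c + K"
proof -
  obtain R where R: "R > 0" "\<And>x. R \<le> \<bar>x\<bar> \<Longrightarrow> f c + K \<le> f x"
    using coercive_eventually_ge[OF coer] by blast
  have "f c + K \<le> f (min c (-R))" using R by auto
  then obtain s where s: "s \<le> c" "f s = f c + K"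
    using IVT2'[of f c "f c + K" "min c (-R)"] convex_coercive_continuous assms(2)
    by (auto simp: c_def)
  show ?thesis
  proof (rule ex1I[of _ s])
    fix s' assume "s' \<le> c \<and> f s' = f c + K"
    with s convex_coercive_strict_antimono_left show "s' = s"
      unfolding c_def by (metis less_irrefl linorder_neqE_linordered_idom)
  qed (use s in auto)
qed

end

section \<open>The grid points I, Ibar, S and s of the backward recursion\<close>

context
  fixes P :: "'a invmodel" and \<theta> :: real
  assumes theta: "0 < \<theta>" and Kpos: "\<forall>i<hor P. 0 \<le> setupK P i"
    and Ccoer: "\<forall>i<hor P. filterlim (Cf P i) at_top at_infinity"
begin

lemma Ifrom_on_grid: "\<exists>m. Ifrom P \<theta> u b = zg \<theta> m \<and> zg \<theta> m < min (b - \<theta>) (Cm P u)"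
proof -
  let ?v = "min (b - \<theta>) (Cm P u)"
  have "zg \<theta> (\<lfloor>?v / \<theta>\<rfloor> - 1) < ?v"
    using zg_floor_le[OF theta, of ?v] theta by (simp add: zg_pred)
  then obtain m where "zg \<theta> m < ?v" "Sup {zg \<theta> m | m. zg \<theta> m < ?v} = zg \<theta> m"
    using grid_Sup_attained[OF theta, of "\<lambda>m. zg \<theta> m < ?v" _ ?v] by fastforce
  then show ?thesis unfolding Ifrom_def by auto
qed

lemma Ibarfrom_on_grid:
  assumes "u < hor P"
  shows "\<exists>m. Ibarfrom P \<theta> u (zg \<theta> m\<^sub>I) = zg \<theta> (m + 1) \<and> m < m\<^sub>I \<and>
              Cf P u (zg \<theta> m) > Cf P u (zg \<theta> m\<^sub>I) + setupK P u"
proof -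
  let ?I = "zg \<theta> m\<^sub>I" and ?C = "Cf P u" and ?K = "setupK P u"
  let ?Q = "\<lambda>m. zg \<theta> m \<le> ?I \<and> ?C (zg \<theta> m) > ?C ?I + ?K"
  have "filterlim ?C at_top at_infinity" using Ccoer assms by blast
  then obtain R where R: "R > 0" "\<And>x. R \<le> \<bar>x\<bar> \<Longrightarrow> ?C ?I + ?K + 1 \<le> ?C x"
    by (rule coercive_eventually_ge[where B = "?C ?I + ?K + 1"]) blast
  define m\<^sub>0 where "m\<^sub>0 = min m\<^sub>I (- \<lceil>R / \<theta>\<rceil>)"
  have "zg \<theta> m\<^sub>0 \<le> zg \<theta> (- \<lceil>R / \<theta>\<rceil>)" using theta by (simp add: zg_le_iff m\<^sub>0_def)
  also have "\<dots> \<le> - R" using le_zg_ceiling[OF theta, of R] by (simp add: zg_def)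
  finally have "R \<le> \<bar>zg \<theta> m\<^sub>0\<bar>" using R(1) by linarith
  then have "?Q m\<^sub>0" using R(2)[of "zg \<theta> m\<^sub>0"] theta by (auto simp: m\<^sub>0_def zg_le_iff)
  then obtain m where m: "?Q m" "Sup {zg \<theta> m | m. ?Q m} = zg \<theta> m"
    using grid_Sup_attained[OF theta, of ?Q m\<^sub>0 ?I] by blast
  have "m \<noteq> m\<^sub>I" using m(1) Kpos assms by auto
  then have "m < m\<^sub>I" using m(1) theta by (auto simp: zg_le_iff)
  with m show ?thesis unfolding Ibarfrom_def by (auto simp: zg_succ)
qed

lemma Cm_le_SU:
  assumes "u < hor P"
  shows "Cm P u \<le> SU P \<theta> u"
proof -
  let ?C = "Cf P u" and ?c = "Cf P u (zg \<theta> (n0 P \<theta> u)) + setupK P u"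
  have "filterlim ?C at_top at_infinity" using Ccoer assms by blast
  then obtain R where R: "R > 0" "\<And>x. R \<le> \<bar>x\<bar> \<Longrightarrow> ?c + 1 \<le> ?C x"
    by (rule coercive_eventually_ge[where B = "?c + 1"]) blast
  define m\<^sub>0 where "m\<^sub>0 = \<lceil>max R (Cm P u) / \<theta>\<rceil>"
  have "max R (Cm P u) \<le> zg \<theta> m\<^sub>0"
    unfolding m\<^sub>0_def by (rule le_zg_ceiling[OF theta])
  then have "zg \<theta> m\<^sub>0 \<in> {zg \<theta> m | m. Cm P u \<le> zg \<theta> m \<and> ?C (zg \<theta> m) > ?c}"
    using R(2)[of "zg \<theta> m\<^sub>0"] by force
  then show ?thesis unfolding SU_def by (intro cInf_greatest) auto
qed

lemma Iv_Ibar_on_grid: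
  assumes "Suc u < hor P"
  obtains m\<^sub>I m\<^sub>b where "Iv P \<theta> u = zg \<theta> m\<^sub>I" "zg \<theta> m\<^sub>I < Ibar P \<theta> (Suc u) - \<theta>"
    "zg \<theta> m\<^sub>I < Cm P u" "Ibar P \<theta> u = zg \<theta> (m\<^sub>b + 1)" "m\<^sub>b < m\<^sub>I"
    "Cf P u (zg \<theta> m\<^sub>b) > Cf P u (zg \<theta> m\<^sub>I) + setupK P u"
proof -
  obtain m\<^sub>I where I: "Iv P \<theta> u = zg \<theta> m\<^sub>I" "zg \<theta> m\<^sub>I < min (Ibar P \<theta> (Suc u) - \<theta>) (Cm P u)"
    using Ifrom_on_grid unfolding Iv_def by blast
  moreover obtain m\<^sub>b where "Ibarfrom P \<theta> u (zg \<theta> m\<^sub>I) = zg \<theta> (m\<^sub>b + 1)" "m\<^sub>b < m\<^sub>I"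
     "Cf P u (zg \<theta> m\<^sub>b) > Cf P u (zg \<theta> m\<^sub>I) + setupK P u"
    using Ibarfrom_on_grid[of u m\<^sub>I] assms by auto
  moreover note Ibar_step[OF assms]
  ultimately show ?thesis by (intro that[of m\<^sub>I m\<^sub>b]) auto
qed

lemma Sv_on_grid:
  assumes "Suc u < hor P"
  obtains m\<^sub>S where "Sv P \<theta> u = zg \<theta> m\<^sub>S" "Iv P \<theta> u \<le> zg \<theta> m\<^sub>S" "zg \<theta> m\<^sub>S \<le> SU P \<theta> u"
    "\<And>n. Iv P \<theta> u \<le> zg \<theta> n \<Longrightarrow> zg \<theta> n \<le> SU P \<theta> u \<Longrightarrow> Hf P \<theta> u (zg \<theta> m\<^sub>S) \<le> Hf P \<theta> u (zg \<theta> n)"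
proof -
  obtain m\<^sub>I where I: "Iv P \<theta> u = zg \<theta> m\<^sub>I" "zg \<theta> m\<^sub>I < Cm P u"
    using Iv_Ibar_on_grid[OF assms] by metis
  let ?U = "SU P \<theta> u" and ?H = "Hf P \<theta> u"
  let ?N = "{n. m\<^sub>I \<le> n \<and> zg \<theta> n \<le> ?U}"
  have "?N \<subseteq> {m\<^sub>I..\<lceil>?U / \<theta>\<rceil>}"
  proof
    fix n assume "n \<in> ?N"
    then have "zg \<theta> n \<le> zg \<theta> \<lceil>?U / \<theta>\<rceil>" "m\<^sub>I \<le> n"
      using le_zg_ceiling[OF theta, of ?U] by auto
    then show "n \<in> {m\<^sub>I..\<lceil>?U / \<theta>\<rceil>}" using theta by (simp add: zg_le_iff)
  qed
  then have fin: "finite ?N" by (rule finite_subset) simp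
  have "m\<^sub>I \<in> ?N" using I Cm_le_SU[of u] assms by auto
  then have ne: "?N \<noteq> {}" by blast
  define n\<^sub>0 where "n\<^sub>0 = arg_min_on (\<lambda>n. ?H (zg \<theta> n)) ?N"
  have n\<^sub>0: "n\<^sub>0 \<in> ?N" "\<forall>k\<in>?N. ?H (zg \<theta> n\<^sub>0) \<le> ?H (zg \<theta> k)"
    unfolding n\<^sub>0_def using arg_min_if_finite(1)[OF fin ne]
    by (auto intro: arg_min_least[OF fin ne, where f = "\<lambda>n. ?H (zg \<theta> n)"])
  have I_le: "\<And>n. Iv P \<theta> u \<le> zg \<theta> n \<longleftrightarrow> m\<^sub>I \<le> n" using I theta by (simp add: zg_le_iff)
  let ?Q = "\<lambda>m. Iv P \<theta> u \<le> zg \<theta> m \<and> zg \<theta> m \<le> ?U \<and>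
                  (\<forall>n. Iv P \<theta> u \<le> zg \<theta> n \<and> zg \<theta> n \<le> ?U \<longrightarrow> ?H (zg \<theta> m) \<le> ?H (zg \<theta> n))"
  have "?Q n\<^sub>0" using n\<^sub>0 I_le by auto
  then obtain m where m: "?Q m" "Sup {zg \<theta> m | m. ?Q m} = zg \<theta> m"
    using grid_Sup_attained[OF theta, of ?Q n\<^sub>0 ?U] by blast
  then have "Sv P \<theta> u = zg \<theta> m" using Sv_step[OF assms] by simp
  with m(1) show ?thesis by (intro that[of m]) blast+
qed

lemma sv_on_grid:
  assumes "Suc u < hor P"
  obtains m\<^sub>s where "sv P \<theta> u = zg \<theta> m\<^sub>s" "Ibar P \<theta> u \<le> sv P \<theta> u" "sv P \<theta> u \<le> Sv P \<theta> u"
    "Hf P \<theta> u (sv P \<theta> u) \<le> Hf P \<theta> u (Sv P \<theta> u) + setupK P u"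
    "setupK P u \<noteq> 0 \<Longrightarrow> \<forall>n. Ibar P \<theta> u \<le> zg \<theta> n \<and> zg \<theta> n \<le> Sv P \<theta> u \<and>
          Hf P \<theta> u (zg \<theta> n) \<le> Hf P \<theta> u (Sv P \<theta> u) + setupK P u \<longrightarrow> m\<^sub>s \<le> n"
proof -
  obtain m\<^sub>I m\<^sub>b where I: "Iv P \<theta> u = zg \<theta> m\<^sub>I" "Ibar P \<theta> u = zg \<theta> (m\<^sub>b + 1)" "m\<^sub>b < m\<^sub>I"
    using Iv_Ibar_on_grid[OF assms] by metis
  obtain m\<^sub>S where S: "Sv P \<theta> u = zg \<theta> m\<^sub>S" "Iv P \<theta> u \<le> zg \<theta> m\<^sub>S"
    using Sv_on_grid[OF assms] by metis
  have Ibar_le_S: "Ibar P \<theta> u \<le> Sv P \<theta> u" using I S theta by (auto simp: zg_le_iff)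
  let ?H = "Hf P \<theta> u" and ?K = "setupK P u"
  show ?thesis
  proof (cases "?K = 0")
    case True
    then have "sv P \<theta> u = Sv P \<theta> u" using sv_step[OF assms] by simp
    with S Ibar_le_S True show ?thesis by (intro that[of m\<^sub>S]) auto
  next
    case False
    let ?Q = "\<lambda>m. Ibar P \<theta> u \<le> zg \<theta> m \<and> zg \<theta> m \<le> Sv P \<theta> u \<and> ?H (zg \<theta> m) \<le> ?H (Sv P \<theta> u) + ?K"
    have "?Q m\<^sub>S" using S Ibar_le_S Kpos assms by auto
    then obtain m where m: "?Q m" "Inf {zg \<theta> m | m. ?Q m} = zg \<theta> m" "\<forall>n. ?Q n \<longrightarrow> m \<le> n"
      using grid_Inf_attained[OF theta, of ?Q m\<^sub>S "Ibar P \<theta> u"] by blast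
    then have "sv P \<theta> u = zg \<theta> m" using sv_step[OF assms] False by simp
    with m(1,3) show ?thesis by (intro that[of m]) auto
  qed
qed

lemma Ibar_le_sv:
  assumes "u < hor P"
  shows "Ibar P \<theta> u \<le> sv P \<theta> u"
proof (cases "Suc u < hor P")
  case True
  then show ?thesis using sv_on_grid by metis
next
  case False
  then have "u = hor P - 1" using assms by arith
  then show ?thesis using recursion_last(3,4)[of P \<theta>] by simp
qed

text \<open>If \<open>s\<^sub>t - \<theta> \<ge> Ibar\<^sub>t\<close> this is the minimality of \<open>s\<^sub>t\<close>. Otherwise \<open>s\<^sub>t - \<theta>\<close> is the grid
  point defining \<open>Ibar\<^sub>t\<close>; left of \<open>I\<^sub>t < Ibar\<^sub>t\<^sub>+\<^sub>1 - \<theta> \<le> s\<^sub>t\<^sub>+\<^sub>1 - \<theta>\<close> the expected future cost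
  in \<open>H\<^sub>t\<close> is constant, so \<open>H\<^sub>t\<close> inherits the jump \<open>C\<^sub>t(s\<^sub>t - \<theta>) > C\<^sub>t(I\<^sub>t) + K\<^sub>t\<close>, while
  \<open>H\<^sub>t(I\<^sub>t) \<ge> H\<^sub>t(S\<^sub>t)\<close>.\<close>
lemma Hf_Sv_add_setupK_less:
  assumes u: "Suc u < hor P" and K: "setupK P u \<noteq> 0"
  shows "Hf P \<theta> u (Sv P \<theta> u) + setupK P u < Hf P \<theta> u (sv P \<theta> u - \<theta>)"
proof -
  let ?H = "Hf P \<theta> u" and ?K = "setupK P u" and ?C = "Cf P u"
  obtain m\<^sub>s where s: "sv P \<theta> u = zg \<theta> m\<^sub>s" "Ibar P \<theta> u \<le> sv P \<theta> u" "sv P \<theta> u \<le> Sv P \<theta> u"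
    "\<forall>n. Ibar P \<theta> u \<le> zg \<theta> n \<and> zg \<theta> n \<le> Sv P \<theta> u \<and> ?H (zg \<theta> n) \<le> ?H (Sv P \<theta> u) + ?K \<longrightarrow> m\<^sub>s \<le> n"
    using sv_on_grid[OF u] K by metis
  obtain m\<^sub>I m\<^sub>b where I: "Iv P \<theta> u = zg \<theta> m\<^sub>I" "zg \<theta> m\<^sub>I < Ibar P \<theta> (Suc u) - \<theta>"
    "zg \<theta> m\<^sub>I < Cm P u" "Ibar P \<theta> u = zg \<theta> (m\<^sub>b + 1)" "m\<^sub>b < m\<^sub>I" "?C (zg \<theta> m\<^sub>b) > ?C (zg \<theta> m\<^sub>I) + ?K"
    using Iv_Ibar_on_grid[OF u] by metis
  have "m\<^sub>b + 1 \<le> m\<^sub>s" using s(1,2) I(4) theta by (simp add: zg_le_iff)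
  then consider "m\<^sub>b + 1 < m\<^sub>s" | "m\<^sub>s = m\<^sub>b + 1" by linarith
  then show ?thesis
  proof cases
    case 1
    then have "Ibar P \<theta> u \<le> zg \<theta> (m\<^sub>s - 1)" using I(4) theta by (simp add: zg_le_iff)
    moreover have "zg \<theta> (m\<^sub>s - 1) \<le> Sv P \<theta> u" using s(1,3) theta by (simp add: zg_pred)
    ultimately have "\<not> ?H (zg \<theta> (m\<^sub>s - 1)) \<le> ?H (Sv P \<theta> u) + ?K" using s(4) by force
    then show ?thesis using s(1) by (simp add: zg_pred)
  next
    case 2
    let ?c = "Hf P \<theta> (Suc u) (Sv P \<theta> (Suc u)) + setupK P (Suc u)"
    have "Ibar P \<theta> (Suc u) \<le> sv P \<theta> (Suc u)" using Ibar_le_sv u by blast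
    then have "Vf P \<theta> (Suc u) (y - zg \<theta> (int m - 1)) = ?c" if "y \<le> zg \<theta> m\<^sub>I" for y m
      using that I(2) zg_of_nat_pred_ge[OF theta, of m] by (intro Vf_below) linarith
    then have H_C: "?H y = ?C y + disc P * (\<Sum>m. ?c * fg P \<theta> u (int m - 1))" if "y \<le> zg \<theta> m\<^sub>I" for y
      using that by (simp add: Hf_step[OF u])
    have "zg \<theta> m\<^sub>b \<le> zg \<theta> m\<^sub>I" using I(5) theta by (simp add: zg_le_iff)
    then have "?H (zg \<theta> m\<^sub>b) - ?H (zg \<theta> m\<^sub>I) = ?C (zg \<theta> m\<^sub>b) - ?C (zg \<theta> m\<^sub>I)"
      using H_C[of "zg \<theta> m\<^sub>b"] H_C[of "zg \<theta> m\<^sub>I"] by simp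
    moreover obtain m\<^sub>S where "Sv P \<theta> u = zg \<theta> m\<^sub>S"
      "\<And>n. Iv P \<theta> u \<le> zg \<theta> n \<Longrightarrow> zg \<theta> n \<le> SU P \<theta> u \<Longrightarrow> ?H (zg \<theta> m\<^sub>S) \<le> ?H (zg \<theta> n)"
      using Sv_on_grid[OF u] by metis
    then have "?H (Sv P \<theta> u) \<le> ?H (zg \<theta> m\<^sub>I)"
      using I(1,3) Cm_le_SU[of u] u by force
    moreover have "sv P \<theta> u - \<theta> = zg \<theta> m\<^sub>b" using s(1) 2 by (simp add: zg_succ)
    ultimately show ?thesis using I(6) by (metis add_less_cancel_left diff_add_cancel
          le_less_trans less_diff_eq add.commute)
  qed
qed

end

section \<open>Oscillation on grid cells and the discretisation error\<close>

definition grid_osc_bound :: "real \<Rightarrow> (real \<Rightarrow> real) \<Rightarrow> (int \<Rightarrow> real) \<Rightarrow> bool" where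
  "grid_osc_bound \<theta> V \<phi> \<longleftrightarrow> (\<forall>j. 0 \<le> \<phi> j \<and> \<phi> j \<le> \<phi> (j + 1)) \<and>
     (\<forall>j y y'. y \<in> {zg \<theta> (j - 1)..zg \<theta> j} \<longrightarrow> y' \<in> {zg \<theta> (j - 1)..zg \<theta> j} \<longrightarrow>
        \<bar>V y - V y'\<bar> \<le> \<phi> j)"

lemma grid_osc_bound_nonneg: "grid_osc_bound \<theta> V \<phi> \<Longrightarrow> 0 \<le> \<phi> j"
  and grid_osc_bound_mono: "grid_osc_bound \<theta> V \<phi> \<Longrightarrow> \<phi> j \<le> \<phi> (j + 1)"
  and grid_osc_bound_cell: "grid_osc_bound \<theta> V \<phi> \<Longrightarrow> y \<in> {zg \<theta> (j - 1)..zg \<theta> j} \<Longrightarrow>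
         y' \<in> {zg \<theta> (j - 1)..zg \<theta> j} \<Longrightarrow> \<bar>V y - V y'\<bar> \<le> \<phi> j"
  unfolding grid_osc_bound_def by blast+

lemma grid_osc_bound_two_cells:
  assumes "grid_osc_bound \<theta> V \<phi>" "0 < \<theta>"
    and "zg \<theta> (j - 1) \<le> y" "y \<le> zg \<theta> j" "zg \<theta> (j - 2) \<le> w" "w \<le> y"
  shows "V w - V y \<le> 2 * \<phi> j"
proof -
  note osc = grid_osc_bound_cell[OF assms(1)]
  have "\<phi> (j - 1) \<le> \<phi> j" using grid_osc_bound_mono[OF assms(1), of "j - 1"] by simp
  show ?thesis
  proof (cases "zg \<theta> (j - 1) \<le> w")
    case True
    then have "\<bar>V w - V y\<bar> \<le> \<phi> j" using osc assms(3-6) by force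
    with grid_osc_bound_nonneg[OF assms(1), of j] show ?thesis by linarith
  next
    case False
    have "j - 1 - 1 = j - 2" by simp
    then have "\<bar>V w - V (zg \<theta> (j - 1))\<bar> \<le> \<phi> (j - 1)"
      using osc[of w "j - 1" "zg \<theta> (j - 1)"] False assms(2,5) by (simp add: zg_pred)
    moreover have "\<bar>V (zg \<theta> (j - 1)) - V y\<bar> \<le> \<phi> j"
      using osc assms(2-4) by (simp add: zg_pred)
    ultimately show ?thesis using \<open>\<phi> (j - 1) \<le> \<phi> j\<close> by linarith
  qed
qed

definition cell_prob :: "'a measure \<Rightarrow> ('a \<Rightarrow> real) \<Rightarrow> real \<Rightarrow> int \<Rightarrow> real" where
  "cell_prob M D \<theta> j =
     measure M {\<omega> \<in> space M. D \<omega> \<le> zg \<theta> (j + 1)} - measure M {\<omega> \<in> space M. D \<omega> \<le> zg \<theta> j}"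

lemma fg_eq_cell_prob: "fg P \<theta> t = cell_prob (pspace P) (dem P t) \<theta>"
  by (simp add: fun_eq_iff fg_def Fd_def cell_prob_def)

lemma grid_cell_exists:
  assumes "0 < \<theta>"
  obtains j where "zg \<theta> j < d" "d \<le> zg \<theta> (j + 1)"
  using zg_ceiling_pred_less[OF assms] le_zg_ceiling[OF assms] by (intro that[of "\<lceil>d / \<theta>\<rceil> - 1"]) auto

lemma grid_cell_unique:
  assumes "0 < \<theta>" "zg \<theta> i < d" "d \<le> zg \<theta> (i + 1)" "zg \<theta> j < d" "d \<le> zg \<theta> (j + 1)"
  shows "i = j"
proof -
  have "zg \<theta> i < zg \<theta> (j + 1)" "zg \<theta> j < zg \<theta> (i + 1)" using assms(2-5) by linarith+
  then show ?thesis using assms(1) by (simp add: zg_less_iff)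
qed

context prob_space
begin

context
  fixes D :: "'a \<Rightarrow> real" and \<theta> :: real
  assumes D: "D \<in> borel_measurable M" and theta: "0 < \<theta>"
begin

lemma measure_grid_cell:
  "measure M {\<omega> \<in> space M. zg \<theta> j < D \<omega> \<and> D \<omega> \<le> zg \<theta> (j + 1)} = cell_prob M D \<theta> j"
proof -
  have "{\<omega> \<in> space M. zg \<theta> j < D \<omega> \<and> D \<omega> \<le> zg \<theta> (j + 1)} =
     {\<omega> \<in> space M. D \<omega> \<le> zg \<theta> (j + 1)} - {\<omega> \<in> space M. D \<omega> \<le> zg \<theta> j}" by auto
  moreover have "{\<omega> \<in> space M. D \<omega> \<le> zg \<theta> j} \<subseteq> {\<omega> \<in> space M. D \<omega> \<le> zg \<theta> (j + 1)}"
    using theta by (auto simp: zg_succ)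
  moreover have "{\<omega> \<in> space M. D \<omega> \<le> a} \<in> sets M" for a
    using D by measurable
  ultimately show ?thesis by (simp add: finite_measure_Diff cell_prob_def)
qed

lemma cell_prob_nonneg: "0 \<le> cell_prob M D \<theta> j"
  using measure_grid_cell[of j] by (metis measure_nonneg)

lemma sums_cell_prob_tail:
  "(\<lambda>n. cell_prob M D \<theta> (a + int n)) sums (1 - measure M {\<omega> \<in> space M. D \<omega> \<le> zg \<theta> a})"
proof -
  define A where "A n = {\<omega> \<in> space M. D \<omega> \<le> zg \<theta> (a + int n)}" for n
  have "A n \<in> sets M" for n unfolding A_def using D by measurable
  then have "range A \<subseteq> sets M" by blast
  moreover have "incseq A"
    unfolding incseq_def A_def using theta by (auto simp: zg_le_iff intro: order_trans)
  moreover have "(\<Union>n. A n) = space M"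
  proof (intro equalityI subsetI)
    fix \<omega> assume \<omega>: "\<omega> \<in> space M"
    have "D \<omega> \<le> zg \<theta> \<lceil>D \<omega> / \<theta>\<rceil>" by (rule le_zg_ceiling[OF theta])
    also have "\<dots> \<le> zg \<theta> (a + int (nat (\<lceil>D \<omega> / \<theta>\<rceil> - a)))" using theta by (simp add: zg_le_iff)
    finally show "\<omega> \<in> (\<Union>n. A n)" using \<omega> unfolding A_def by blast
  qed (auto simp: A_def)
  ultimately have "(\<lambda>n. measure M (A n)) \<longlonglongrightarrow> 1"
    using finite_Lim_measure_incseq prob_space by metis
  then have "(\<lambda>n. measure M (A n) - measure M (A 0)) \<longlonglongrightarrow> 1 - measure M (A 0)"
    by (intro tendsto_diff tendsto_const)
  then have "(\<lambda>n. measure M (A (Suc n)) - measure M (A n)) sums (1 - measure M (A 0))"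
    unfolding sums_def sum_lessThan_telescope[where f = "\<lambda>n. measure M (A n)"] .
  then show ?thesis by (simp add: A_def cell_prob_def ac_simps)
qed

lemma integral_indicator_mult:
  assumes "A \<in> sets M"
  shows "integrable M (\<lambda>\<omega>. indicator A \<omega> * c)" "(\<integral>\<omega>. indicator A \<omega> * c \<partial>M) = measure M A * c"
proof -
  show int: "integrable M (\<lambda>\<omega>. indicator A \<omega> * c)"
    using assms by (intro integrable_mult_left integrable_real_indicator)
      (auto simp: less_top[symmetric])
  show "(\<integral>\<omega>. indicator A \<omega> * c \<partial>M) = measure M A * c"
    using assms sets.Int_space_eq2[OF assms] by simp
qed

end

end

lemma grid_series_split:
  fixes V :: "real \<Rightarrow> real" and p :: "int \<Rightarrow> real"
  assumes sum: "summable (\<lambda>m. V (x - zg \<theta> (int m - 1)) * p (int m - 1))" and L: "-2 \<le> L"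
    and const: "\<And>m. L < m \<Longrightarrow> V (x - zg \<theta> m) = c"
    and tail: "(\<lambda>n. p (L + 1 + int n)) sums q"
  shows "(\<Sum>m. V (x - zg \<theta> (int m - 1)) * p (int m - 1)) = (\<Sum>j\<in>{-1..L}. V (x - zg \<theta> j) * p j) + c * q"
proof -
  define a where "a m = V (x - zg \<theta> (int m - 1)) * p (int m - 1)" for m
  define N where "N = nat (L + 2)"
  have N: "int N = L + 2" using L by (simp add: N_def)
  have "(\<lambda>n. a (n + N)) sums (c * q)"
    using sums_mult[OF tail, of c] const by (simp add: a_def N algebra_simps)
  then have "(\<Sum>n. a (n + N)) = c * q" by (rule sums_unique[symmetric])
  moreover have "(\<Sum>m<N. a m) = (\<Sum>j\<in>{-1..int N - 2}. V (x - zg \<theta> j) * p j)"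
    unfolding a_def by (rule sum_shift_nat_int)
  ultimately show ?thesis
    using suminf_split_initial_segment[OF sum[folded a_def], of N] N by (simp add: a_def)
qed

lemma (in prob_space) expectation_minus_grid_series_le:
  fixes V :: "real \<Rightarrow> real" and \<phi> :: "int \<Rightarrow> real"
  assumes D: "D \<in> borel_measurable M" "\<And>\<omega>. \<omega> \<in> space M \<Longrightarrow> 0 \<le> D \<omega>" and theta: "0 < \<theta>"
    and int: "integrable M (\<lambda>\<omega>. V (x - D \<omega>))"
    and sum: "summable (\<lambda>m. V (x - zg \<theta> (int m - 1)) * cell_prob M D \<theta> (int m - 1))"
    and L: "-2 \<le> L" and const: "\<And>y. y \<le> x - zg \<theta> (L + 1) \<Longrightarrow> V y = c"
    and osc: "grid_osc_bound \<theta> V \<phi>" and x: "zg \<theta> (k - 1) \<le> x" "x \<le> zg \<theta> k"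
  shows "(\<integral>\<omega>. V (x - D \<omega>) \<partial>M) - (\<Sum>m. V (x - zg \<theta> (int m - 1)) * cell_prob M D \<theta> (int m - 1))
           \<le> (\<Sum>j\<in>{-1..L}. 2 * \<phi> (k - j) * cell_prob M D \<theta> j)"
proof -
  let ?p = "cell_prob M D \<theta>" and ?J = "{-1..L}"
  define E where "E j = {\<omega> \<in> space M. zg \<theta> j < D \<omega> \<and> D \<omega> \<le> zg \<theta> (j + 1)}" for j
  define T where "T = {\<omega> \<in> space M. zg \<theta> (L + 1) < D \<omega>}"
  define h where "h j = V (x - zg \<theta> j) + 2 * \<phi> (k - j)" for j
  define r where "r \<omega> = (\<Sum>j\<in>?J. indicator (E j) \<omega> * h j) + indicator T \<omega> * c" for \<omega>
  have E: "E j \<in> sets M" "measure M (E j) = ?p j" for j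
  proof -
    show "E j \<in> sets M" unfolding E_def using D(1) by measurable
    show "measure M (E j) = ?p j" unfolding E_def by (rule measure_grid_cell[OF D(1) theta])
  qed
  have T: "T \<in> sets M" "measure M T = 1 - measure M {\<omega> \<in> space M. D \<omega> \<le> zg \<theta> (L + 1)}"
  proof -
    show "T \<in> sets M" unfolding T_def using D(1) by measurable
    have "T = space M - {\<omega> \<in> space M. D \<omega> \<le> zg \<theta> (L + 1)}" by (auto simp: T_def)
    moreover have "{\<omega> \<in> space M. D \<omega> \<le> zg \<theta> (L + 1)} \<in> sets M" using D(1) by measurable
    ultimately show "measure M T = 1 - measure M {\<omega> \<in> space M. D \<omega> \<le> zg \<theta> (L + 1)}"
      using prob_compl by simp
  qed
  note ind = integral_indicator_mult[OF D(1) theta]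
  have int_sum: "integrable M (\<lambda>\<omega>. \<Sum>j\<in>?J. indicator (E j) \<omega> * h j)"
    using ind(1)[OF E(1)] by (intro Bochner_Integration.integrable_sum)
  have int_r: "integrable M r"
    unfolding r_def using int_sum ind(1)[OF T(1)] by (rule Bochner_Integration.integrable_add)
  have "integral\<^sup>L M r = (\<Sum>j\<in>?J. (\<integral>\<omega>. indicator (E j) \<omega> * h j \<partial>M)) + (\<integral>\<omega>. indicator T \<omega> * c \<partial>M)"
    unfolding r_def Bochner_Integration.integral_add[OF int_sum ind(1)[OF T(1)]]
    using ind(1)[OF E(1)] by (subst Bochner_Integration.integral_sum) auto
  also have "\<dots> = (\<Sum>j\<in>?J. ?p j * h j) + measure M T * c"
    using ind(2) E T by simp
  also have "\<dots> = (\<Sum>m. V (x - zg \<theta> (int m - 1)) * ?p (int m - 1)) + (\<Sum>j\<in>?J. 2 * \<phi> (k - j) * ?p j)"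
  proof -
    have "\<And>m. L < m \<Longrightarrow> V (x - zg \<theta> m) = c"
      using theta by (intro const) (simp add: zg_le_iff)
    then have "(\<Sum>m. V (x - zg \<theta> (int m - 1)) * ?p (int m - 1))
        = (\<Sum>j\<in>?J. V (x - zg \<theta> j) * ?p j) + c * measure M T"
      using grid_series_split[OF sum L] sums_cell_prob_tail[OF D(1) theta, of "L + 1"] T(2) by simp
    then show ?thesis by (simp add: h_def algebra_simps sum.distrib sum_distrib_left)
  qed
  finally have int_r_eq: "integral\<^sup>L M r = \<dots>" .
  have "V (x - D \<omega>) \<le> r \<omega>" if \<omega>: "\<omega> \<in> space M" for \<omega>
  proof (cases "\<omega> \<in> T")
    case True
    have "\<omega> \<notin> E j" if "j \<in> ?J" for j
    proof -
      have "zg \<theta> (j + 1) \<le> zg \<theta> (L + 1)" using that theta by (simp add: zg_le_iff)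
      then show ?thesis using True by (auto simp: E_def T_def)
    qed
    then have "r \<omega> = c" using True by (simp add: r_def)
    moreover have "V (x - D \<omega>) = c" using True by (intro const) (simp add: T_def)
    ultimately show ?thesis by simp
  next
    case False
    obtain j where j: "zg \<theta> j < D \<omega>" "D \<omega> \<le> zg \<theta> (j + 1)"
      using grid_cell_exists[OF theta] by blast
    have E_iff: "\<omega> \<in> E i \<longleftrightarrow> i = j" for i
      using grid_cell_unique[OF theta _ _ j, of i] j \<omega> unfolding E_def by blast
    have "zg \<theta> 0 \<le> zg \<theta> (j + 1)" using j(2) D(2)[OF \<omega>] by (simp add: zg_def)
    then have "-1 \<le> j" using theta by (simp add: zg_le_iff)
    moreover have "zg \<theta> j < zg \<theta> (L + 1)" using j False \<omega> by (simp add: T_def)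
    then have "j \<le> L" using theta by (simp add: zg_less_iff)
    ultimately have "j \<in> ?J" by simp
    have "(\<Sum>i\<in>?J. indicator (E i) \<omega> * h i) = (\<Sum>i\<in>?J. if i = j then h i else 0)"
      by (rule sum.cong) (auto simp: E_iff)
    also have "\<dots> = h j" using \<open>j \<in> ?J\<close> by simp
    finally have "(\<Sum>i\<in>?J. indicator (E i) \<omega> * h i) = h j" .
    then have "r \<omega> = V (x - zg \<theta> j) + 2 * \<phi> (k - j)"
      using False unfolding r_def h_def[of j] by simp
    moreover have "V (x - D \<omega>) - V (x - zg \<theta> j) \<le> 2 * \<phi> (k - j)"
    proof (rule grid_osc_bound_two_cells[OF osc theta])
      have "zg \<theta> (k - j - 1) = zg \<theta> (k - 1) - zg \<theta> j" "zg \<theta> (k - j) = zg \<theta> k - zg \<theta> j"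
        "zg \<theta> (k - j - 2) = zg \<theta> (k - 1) - zg \<theta> (j + 1)"
        by (simp_all add: zg_def algebra_simps)
      with x j show "zg \<theta> (k - j - 1) \<le> x - zg \<theta> j" "x - zg \<theta> j \<le> zg \<theta> (k - j)"
        "zg \<theta> (k - j - 2) \<le> x - D \<omega>" "x - D \<omega> \<le> x - zg \<theta> j"
        by linarith+
    qed
    ultimately show ?thesis by simp
  qed
  then have "(\<integral>\<omega>. V (x - D \<omega>) \<partial>M) \<le> integral\<^sup>L M r"
    by (intro integral_mono[OF int int_r]) auto
  with int_r_eq show ?thesis by simp
qed

section \<open>The upper estimates bound the oscillation of V on grid cells\<close>

lemma phibar_below_sv:
  assumes "u < hor P" "y < sv P \<theta> u"
  shows "phibar P \<theta> \<gamma> u x y = 0"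
proof (cases "Suc u < hor P")
  case True
  then show ?thesis using assms(2) by (simp add: phibar_step phifrom_def)
next
  case False
  then have "u = hor P - 1" using assms(1) by arith
  then show ?thesis using assms(2) recursion_last(3)[of P \<theta>] recursion_last(5)[of P \<theta> \<gamma>] by simp
qed

lemma psibar_as_finite_sum:
  assumes theta: "0 < \<theta>" and u: "Suc u < hor P" and L: "-2 \<le> L"
    and tail: "\<And>m. L < m \<Longrightarrow> y - zg \<theta> m < sv P \<theta> (Suc u)"
  shows "psibar P \<theta> \<gamma> u x y = \<gamma> u * x +
           disc P * (\<Sum>m\<in>{-1..L}. phibar P \<theta> \<gamma> (Suc u) x (y - zg \<theta> m) * fg P \<theta> u m)"
proof -
  let ?s = "sv P \<theta> (Suc u)"
  let ?g = "\<lambda>m. phibar P \<theta> \<gamma> (Suc u) x (y - zg \<theta> m) * fg P \<theta> u m"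
  have g0: "?g m = 0" if "y - zg \<theta> m < ?s" for m
    using phibar_below_sv[OF u that] by simp
  show ?thesis
  proof (cases "y < ?s - \<theta>")
    case True
    have "y - zg \<theta> m < ?s" if "-1 \<le> m" for m
      using True that theta zg_le_iff[OF theta, of "-1" m] by (simp add: zg_def)
    then have "(\<Sum>m\<in>{-1..L}. ?g m) = 0" using g0 by (intro sum.neutral) auto
    with True show ?thesis by (simp add: psibar_step[OF u] psifrom_def)
  next
    case False
    define n where "n = \<lfloor>(y - ?s) / \<theta>\<rfloor> + 1"
    have psi: "psibar P \<theta> \<gamma> u x y = \<gamma> u * x + disc P * (\<Sum>m\<in>{-1..n - 1}. ?g m)"
      using False by (simp add: psibar_step[OF u] psifrom_def the_grid_cell[OF theta] n_def)
    have "y - ?s < zg \<theta> n" using less_zg_floor_succ[OF theta] by (simp add: n_def)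
    then have gn: "?g m = 0" if "n - 1 < m" for m
      using that g0 zg_le_iff[OF theta, of n m] by simp
    have "\<forall>i\<in>{-1..max L (n - 1)} - {-1..n - 1}. ?g i = 0" by (intro ballI gn) auto
    then have "(\<Sum>m\<in>{-1..n - 1}. ?g m) = (\<Sum>m\<in>{-1..max L (n - 1)}. ?g m)"
      by (intro sum.mono_neutral_left) auto
    also have "\<dots> = (\<Sum>m\<in>{-1..L}. ?g m)"
    proof (rule sum.mono_neutral_right)
      show "\<forall>i\<in>{-1..max L (n - 1)} - {-1..L}. ?g i = 0" by (intro ballI g0 tail) auto
    qed (use L in auto)
    finally show ?thesis using psi by simp
  qed
qed

context
  fixes P :: "'a invmodel" and \<theta> :: real and \<gamma> :: "nat \<Rightarrow> real"
  assumes theta: "0 < \<theta>" and alpha: "0 < disc P" and T2: "2 \<le> hor P"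
    and Kpos: "\<forall>i<hor P. 0 \<le> setupK P i"
    and ps: "prob_space (pspace P)"
    and Dmeas: "\<forall>i < hor P. dem P i \<in> borel_measurable (pspace P)"
    and Cconv: "\<forall>i < hor P. convex_on UNIV (Cf P i)"
    and Ccoer: "\<forall>i < hor P. filterlim (Cf P i) at_top at_infinity"
    and gamma: "\<forall>i < hor P. 0 \<le> \<gamma> i \<and> (\<forall>u v. \<bar>Cf P i u - Cf P i v\<bar> \<le> \<gamma> i * \<bar>u - v\<bar>)"
    and Vsum: "\<forall>i y. 1 \<le> i \<and> i < hor P \<longrightarrow>
                 summable (\<lambda>m. Vf P \<theta> i (y - zg \<theta> (int m - 1)) * fg P \<theta> (i - 1) (int m - 1))"
begin

lemma fg_nonneg: "i < hor P \<Longrightarrow> 0 \<le> fg P \<theta> i m"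
  unfolding fg_eq_cell_prob using prob_space.cell_prob_nonneg[OF ps] Dmeas theta by blast

lemma Cf_cell_osc:
  assumes "i < hor P" "y \<in> {zg \<theta> (j - 1)..zg \<theta> j}" "y' \<in> {zg \<theta> (j - 1)..zg \<theta> j}"
  shows "\<bar>Cf P i y - Cf P i y'\<bar> \<le> \<gamma> i * \<theta>"
proof -
  have "\<bar>Cf P i y - Cf P i y'\<bar> \<le> \<gamma> i * \<bar>y - y'\<bar>" using gamma assms(1) by blast
  also have "\<dots> \<le> \<gamma> i * \<theta>" using gamma assms by (intro mult_left_mono) (auto simp: zg_pred)
  finally show ?thesis .
qed

lemma sT_spec:
  "sT P \<le> Cm P (hor P - 1) \<and>
   Cf P (hor P - 1) (sT P) = Cf P (hor P - 1) (Cm P (hor P - 1)) + setupK P (hor P - 1)"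
proof -
  have "hor P - 1 < hor P" using T2 by simp
  then have "\<exists>!s. s \<le> Cm P (hor P - 1) \<and>
      Cf P (hor P - 1) s = Cf P (hor P - 1) (Cm P (hor P - 1)) + setupK P (hor P - 1)"
    unfolding Cm_def using Cconv Ccoer Kpos by (intro convex_coercive_level_left) auto
  then show ?thesis unfolding sT_def by (rule theI')
qed

lemma grid_osc_bound_last:
  "grid_osc_bound \<theta> (Vf P \<theta> (hor P - 1)) (\<lambda>j. phibar P \<theta> \<gamma> (hor P - 1) \<theta> (zg \<theta> j))"
proof -
  let ?u = "hor P - 1" let ?s = "sT P" and ?C = "Cf P (hor P - 1)"
  have u: "?u < hor P" using T2 by simp
  have phi: "phibar P \<theta> \<gamma> ?u \<theta> (zg \<theta> j) = (if zg \<theta> j < ?s then 0 else \<gamma> ?u * \<theta>)" for j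
    by (simp only: recursion_last)
  have V: "Vf P \<theta> ?u y = ?C (max y ?s)" for y
    using sT_spec unfolding Vf_def Vfrom_def recursion_last by (auto simp: max_def)
  have "0 \<le> \<gamma> ?u * \<theta>" using gamma u theta by simp
  moreover have "zg \<theta> j < ?s" if "zg \<theta> (j + 1) < ?s" for j
    using that theta by (simp add: zg_succ)
  moreover have "\<bar>Vf P \<theta> ?u y - Vf P \<theta> ?u y'\<bar> \<le> phibar P \<theta> \<gamma> ?u \<theta> (zg \<theta> j)"
    if "y \<in> {zg \<theta> (j - 1)..zg \<theta> j}" "y' \<in> {zg \<theta> (j - 1)..zg \<theta> j}" for j y y'
  proof (cases "zg \<theta> j < ?s")
    case True
    then show ?thesis using that unfolding V phi by (simp add: max_def)
  next
    case False
    have "max y ?s \<in> {zg \<theta> (j - 1)..zg \<theta> j}" "max y' ?s \<in> {zg \<theta> (j - 1)..zg \<theta> j}"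
      using that False by auto
    from Cf_cell_osc[OF u this] False show ?thesis unfolding V phi by simp
  qed
  ultimately show ?thesis unfolding grid_osc_bound_def phi by auto
qed

context
  fixes u :: nat
  assumes u: "Suc u < hor P"
    and inv: "grid_osc_bound \<theta> (Vf P \<theta> (Suc u)) (\<lambda>j. phibar P \<theta> \<gamma> (Suc u) \<theta> (zg \<theta> j))"
begin

lemma psibar_grid_nonneg: "0 \<le> psibar P \<theta> \<gamma> u \<theta> (zg \<theta> j)"
proof -
  obtain L where L: "-2 \<le> L" "\<And>m. L < m \<Longrightarrow> zg \<theta> j - zg \<theta> m < sv P \<theta> (Suc u)"
    using grid_tail_index[OF theta] by blast
  have "0 \<le> phibar P \<theta> \<gamma> (Suc u) \<theta> (zg \<theta> j - zg \<theta> m) * fg P \<theta> u m" for m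
    using grid_osc_bound_nonneg[OF inv, of "j - m"] fg_nonneg[of u m] u by (simp add: zg_diff)
  then have "0 \<le> (\<Sum>m\<in>{-1..L}. phibar P \<theta> \<gamma> (Suc u) \<theta> (zg \<theta> j - zg \<theta> m) * fg P \<theta> u m)"
    by (rule sum_nonneg)
  moreover have "0 \<le> \<gamma> u * \<theta>" using gamma u theta by simp
  ultimately show ?thesis
    using psibar_as_finite_sum[OF theta u L] alpha by simp
qed

lemma psibar_grid_mono: "psibar P \<theta> \<gamma> u \<theta> (zg \<theta> j) \<le> psibar P \<theta> \<gamma> u \<theta> (zg \<theta> (j + 1))"
proof -
  let ?ph = "phibar P \<theta> \<gamma> (Suc u) \<theta>"
  obtain L where L: "-2 \<le> L" "\<And>m. L < m \<Longrightarrow> zg \<theta> (j + 1) - zg \<theta> m < sv P \<theta> (Suc u)"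
    using grid_tail_index[OF theta] by blast
  have L': "zg \<theta> j - zg \<theta> m < sv P \<theta> (Suc u)" if "L < m" for m
    using L(2)[OF that] theta by (simp add: zg_succ)
  have "?ph (zg \<theta> j - zg \<theta> m) * fg P \<theta> u m \<le> ?ph (zg \<theta> (j + 1) - zg \<theta> m) * fg P \<theta> u m" for m
  proof -
    have "?ph (zg \<theta> (j - m)) \<le> ?ph (zg \<theta> (j - m + 1))" by (rule grid_osc_bound_mono[OF inv])
    then show ?thesis
      using fg_nonneg[of u m] u by (intro mult_right_mono) (simp_all add: zg_diff zg_succ diff_add_eq)
  qed
  then have "(\<Sum>m\<in>{-1..L}. ?ph (zg \<theta> j - zg \<theta> m) * fg P \<theta> u m)
           \<le> (\<Sum>m\<in>{-1..L}. ?ph (zg \<theta> (j + 1) - zg \<theta> m) * fg P \<theta> u m)"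
    by (rule sum_mono)
  then show ?thesis
    using psibar_as_finite_sum[OF theta u L(1) L'] psibar_as_finite_sum[OF theta u L] alpha by simp
qed

lemma Hf_cell_osc:
  assumes y: "y \<in> {zg \<theta> (j - 1)..zg \<theta> j}" and y': "y' \<in> {zg \<theta> (j - 1)..zg \<theta> j}"
  shows "\<bar>Hf P \<theta> u y - Hf P \<theta> u y'\<bar> \<le> psibar P \<theta> \<gamma> u \<theta> (zg \<theta> j)"
proof -
  let ?V = "Vf P \<theta> (Suc u)" and ?f = "fg P \<theta> u" and ?ph = "phibar P \<theta> \<gamma> (Suc u) \<theta>"
  define a where "a m = ?V (y - zg \<theta> (int m - 1)) * ?f (int m - 1)" for m
  define b where "b m = ?V (y' - zg \<theta> (int m - 1)) * ?f (int m - 1)" for m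
  define d where "d m = ?ph (zg \<theta> j - zg \<theta> (int m - 1)) * ?f (int m - 1)" for m
  have "summable a" "summable b" unfolding a_def b_def using Vsum u by auto
  obtain L where L: "-2 \<le> L" "\<And>m. L < m \<Longrightarrow> zg \<theta> j - zg \<theta> m < sv P \<theta> (Suc u)"
    using grid_tail_index[OF theta] by blast
  have d0: "d m = 0" if "m \<notin> {..<nat (L + 2)}" for m
  proof -
    have "L < int m - 1" using that L(1) by auto
    then show ?thesis using phibar_below_sv[OF u L(2)] unfolding d_def by simp
  qed
  then have "suminf d = (\<Sum>m<nat (L + 2). d m)" by (intro suminf_finite) auto
  also have "\<dots> = (\<Sum>m\<in>{-1..L}. ?ph (zg \<theta> j - zg \<theta> m) * ?f m)"
    unfolding d_def sum_shift_nat_int[of "\<lambda>m. ?ph (zg \<theta> j - zg \<theta> m) * ?f m"] using L(1) by simp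
  finally have psi: "psibar P \<theta> \<gamma> u \<theta> (zg \<theta> j) = \<gamma> u * \<theta> + disc P * suminf d"
    using psibar_as_finite_sum[OF theta u L] by simp
  have "\<bar>a m - b m\<bar> \<le> d m" for m
  proof -
    let ?z = "zg \<theta> (int m - 1)"
    have "y - ?z \<in> {zg \<theta> (j - (int m - 1) - 1)..zg \<theta> (j - (int m - 1))}"
      "y' - ?z \<in> {zg \<theta> (j - (int m - 1) - 1)..zg \<theta> (j - (int m - 1))}"
      using y y' by (simp_all add: zg_diff)
    from grid_osc_bound_cell[OF inv this]
    have "\<bar>?V (y - ?z) - ?V (y' - ?z)\<bar> \<le> ?ph (zg \<theta> j - ?z)" by (simp add: zg_diff)
    then have "\<bar>?V (y - ?z) - ?V (y' - ?z)\<bar> * ?f (int m - 1) \<le> d m"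
      unfolding d_def using fg_nonneg[of u] u by (intro mult_right_mono) auto
    then show ?thesis
      unfolding a_def b_def using fg_nonneg[of u] u by (simp add: left_diff_distrib[symmetric] abs_mult)
  qed
  moreover have "summable d" using d0 by (intro summable_finite[of "{..<nat (L + 2)}"]) auto
  ultimately have "\<bar>suminf (\<lambda>m. a m - b m)\<bar> \<le> suminf d"
    using norm_suminf_le[of "\<lambda>m. a m - b m" d] by simp
  then have osc_sum: "\<bar>suminf a - suminf b\<bar> \<le> suminf d"
    using suminf_diff[OF \<open>summable a\<close> \<open>summable b\<close>] by simp
  have "Hf P \<theta> u y - Hf P \<theta> u y' = (Cf P u y - Cf P u y') + disc P * (suminf a - suminf b)"
    unfolding a_def b_def by (simp add: Hf_step[OF u] algebra_simps)
  then have "\<bar>Hf P \<theta> u y - Hf P \<theta> u y'\<bar> \<le> \<bar>Cf P u y - Cf P u y'\<bar> + disc P * \<bar>suminf a - suminf b\<bar>"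
    using alpha abs_triangle_ineq[of "Cf P u y - Cf P u y'" "disc P * (suminf a - suminf b)"]
    by (simp add: abs_mult)
  also have "\<dots> \<le> \<gamma> u * \<theta> + disc P * suminf d"
    using Cf_cell_osc[of u, OF _ y y'] u osc_sum alpha by (intro add_mono mult_left_mono) auto
  finally show ?thesis unfolding psi .
qed

lemma phibar_grid_eq:
  "phibar P \<theta> \<gamma> u \<theta> (zg \<theta> j) = (if zg \<theta> j < sv P \<theta> u then 0 else psibar P \<theta> \<gamma> u \<theta> (zg \<theta> j))"
proof -
  obtain m\<^sub>s where s: "sv P \<theta> u = zg \<theta> m\<^sub>s"
    using sv_on_grid[OF theta Kpos Ccoer u] by metis
  have "zg \<theta> j = sv P \<theta> u" if "\<not> zg \<theta> j < sv P \<theta> u" "zg \<theta> j - \<theta> < sv P \<theta> u"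
  proof -
    have "zg \<theta> (j - 1) < zg \<theta> m\<^sub>s" "zg \<theta> m\<^sub>s \<le> zg \<theta> j" using that s by (auto simp: zg_pred)
    then have "j = m\<^sub>s" using theta by (simp add: zg_less_iff zg_le_iff)
    then show ?thesis using s by simp
  qed
  then show ?thesis by (auto simp: phibar_step[OF u] phifrom_def)
qed

text \<open>The jump of \<open>V\<^sub>t\<close> at \<open>s\<^sub>t\<close> is controlled by \<open>H\<^sub>t(S\<^sub>t) + K\<^sub>t < H\<^sub>t(s\<^sub>t - \<theta>)\<close> together
  with the oscillation of \<open>H\<^sub>t\<close> on the cell \<open>[s\<^sub>t - \<theta>, s\<^sub>t]\<close>.\<close>
lemma Vf_cell_osc_at_sv:
  assumes y: "y \<in> {zg \<theta> (j - 1)..zg \<theta> j}" and y': "y' \<in> {zg \<theta> (j - 1)..zg \<theta> j}"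
    and below: "y' < sv P \<theta> u" and above: "\<not> y < sv P \<theta> u"
  shows "\<bar>Vf P \<theta> u y - Vf P \<theta> u y'\<bar> \<le> psibar P \<theta> \<gamma> u \<theta> (zg \<theta> j)"
proof -
  let ?s = "sv P \<theta> u" and ?H = "Hf P \<theta> u" and ?S = "Sv P \<theta> u" and ?K = "setupK P u"
  obtain m\<^sub>s where s: "?s = zg \<theta> m\<^sub>s" "?H ?s \<le> ?H ?S + ?K"
    using sv_on_grid[OF theta Kpos Ccoer u] by metis
  have "zg \<theta> (j - 1) < zg \<theta> m\<^sub>s" "zg \<theta> m\<^sub>s \<le> zg \<theta> j" using y y' below above s(1) by auto
  then have "j = m\<^sub>s" using theta by (simp add: zg_less_iff zg_le_iff)
  then have sj: "y = ?s" "?s = zg \<theta> j" using y above s(1) by auto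
  have "?H ?S + ?K - ?H ?s \<le> psibar P \<theta> \<gamma> u \<theta> (zg \<theta> j)"
  proof (cases "?K = 0")
    case True
    then have "?s = ?S" using sv_step[OF u] by simp
    with True psibar_grid_nonneg show ?thesis by simp
  next
    case False
    have "?s - \<theta> \<in> {zg \<theta> (j - 1)..zg \<theta> j}" "?s \<in> {zg \<theta> (j - 1)..zg \<theta> j}"
      using sj theta by (auto simp: zg_pred)
    from Hf_cell_osc[OF this] Hf_Sv_add_setupK_less[OF theta Kpos Ccoer u False]
    show ?thesis by linarith
  qed
  then show ?thesis
    using Vf_below[OF below] Vf_above[OF above] sj(1) s(2) by simp
qed

lemma grid_osc_bound_step:
  "grid_osc_bound \<theta> (Vf P \<theta> u) (\<lambda>j. phibar P \<theta> \<gamma> u \<theta> (zg \<theta> j))"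
proof -
  let ?s = "sv P \<theta> u" and ?V = "Vf P \<theta> u"
  have mono: "phibar P \<theta> \<gamma> u \<theta> (zg \<theta> j) \<le> phibar P \<theta> \<gamma> u \<theta> (zg \<theta> (j + 1))" for j
  proof (cases "zg \<theta> (j + 1) < ?s")
    case True
    then have "zg \<theta> j < ?s" using theta by (simp add: zg_succ)
    with True show ?thesis by (simp add: phibar_grid_eq)
  next
    case False
    then show ?thesis
      using psibar_grid_nonneg[of j] psibar_grid_mono[of j] by (simp add: phibar_grid_eq)
  qed
  have nonneg: "0 \<le> phibar P \<theta> \<gamma> u \<theta> (zg \<theta> j)" for j
    using psibar_grid_nonneg by (simp add: phibar_grid_eq)
  have osc: "\<bar>?V y - ?V y'\<bar> \<le> phibar P \<theta> \<gamma> u \<theta> (zg \<theta> j)"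
    if cell: "y \<in> {zg \<theta> (j - 1)..zg \<theta> j}" "y' \<in> {zg \<theta> (j - 1)..zg \<theta> j}" for j y y'
  proof -
    consider "y < ?s" "y' < ?s" | "\<not> y < ?s" "y' < ?s" | "y < ?s" "\<not> y' < ?s"
      | "\<not> y < ?s" "\<not> y' < ?s" by blast
    then show ?thesis
    proof cases
      case 1
      then show ?thesis using nonneg[of j] by (simp add: Vf_below)
    next
      case 2
      then have "\<not> zg \<theta> j < ?s" using cell by auto
      with Vf_cell_osc_at_sv[OF cell 2(2,1)] show ?thesis unfolding phibar_grid_eq by simp
    next
      case 3
      then have "\<not> zg \<theta> j < ?s" using cell by auto
      with Vf_cell_osc_at_sv[OF cell(2,1) 3(1,2)] show ?thesis
        unfolding phibar_grid_eq by (simp add: abs_minus_commute)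
    next
      case 4
      then have "\<not> zg \<theta> j < ?s" using cell by auto
      with Hf_cell_osc[OF cell] 4 show ?thesis unfolding phibar_grid_eq by (simp add: Vf_above)
    qed
  qed
  show ?thesis unfolding grid_osc_bound_def using nonneg mono osc by blast
qed

end

lemma grid_osc_bound_Vf:
  "u < hor P \<Longrightarrow> grid_osc_bound \<theta> (Vf P \<theta> u) (\<lambda>j. phibar P \<theta> \<gamma> u \<theta> (zg \<theta> j))"
proof (induction "hor P - 1 - u" arbitrary: u)
  case 0
  then have "u = hor P - 1" by arith
  then show ?case using grid_osc_bound_last by simp
next
  case (Suc k)
  then have u: "Suc u < hor P" and "k = hor P - 1 - Suc u" by arith+
  with Suc.hyps(1) have "grid_osc_bound \<theta> (Vf P \<theta> (Suc u)) (\<lambda>j. phibar P \<theta> \<gamma> (Suc u) \<theta> (zg \<theta> j))"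
    by blast
  then show ?case by (rule grid_osc_bound_step[OF u])
qed

end

theorem lemma4p11:
  fixes P :: "'a invmodel" and \<theta> :: real and \<gamma> :: "nat \<Rightarrow> real"
    and t :: nat and x :: real and k :: int
  assumes T2: "2 \<le> hor P"
    and alpha: "0 < disc P" "disc P \<le> 1"
    and Kpos: "\<forall>i < hor P. 0 \<le> setupK P i"
    and ps: "prob_space (pspace P)"
    and Dmeas: "\<forall>i < hor P. dem P i \<in> borel_measurable (pspace P)"
    and Dindep: "prob_space.indep_vars (pspace P) (\<lambda>_. borel) (dem P) {..<hor P}"
    and Dnonneg: "\<forall>i < hor P. \<forall>\<omega> \<in> space (pspace P). 0 \<le> dem P i \<omega>"
    and Dmean: "\<forall>i < hor P. integrable (pspace P) (dem P i)"
    and Cconv: "\<forall>i < hor P. convex_on UNIV (Cf P i)"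
    and Ccoer: "\<forall>i < hor P. filterlim (Cf P i) at_top at_infinity"
    and Kdec: "\<forall>i. Suc i < hor P \<longrightarrow> disc P * setupK P (Suc i) \<le> setupK P i"
    and theta: "0 < \<theta>"
    and Vint: "\<forall>i y. 1 \<le> i \<and> i < hor P \<longrightarrow>
                 integrable (pspace P) (\<lambda>\<omega>. Vf P \<theta> i (y - dem P (i - 1) \<omega>))"
    and Vsum: "\<forall>i y. 1 \<le> i \<and> i < hor P \<longrightarrow>
                 summable (\<lambda>m. Vf P \<theta> i (y - zg \<theta> (int m - 1)) * fg P \<theta> (i - 1) (int m - 1))"
    and gamma: "\<forall>i < hor P. 0 \<le> \<gamma> i \<and> (\<forall>u v. \<bar>Cf P i u - Cf P i v\<bar> \<le> \<gamma> i * \<bar>u - v\<bar>)"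
    and tT: "t + 2 \<le> hor P"
    and xk: "zg \<theta> (k - 1) < x" "x \<le> zg \<theta> k"
  shows "disc P * Af P \<theta> (Suc t) x \<le> 2 * psibar P \<theta> \<gamma> t \<theta> (zg \<theta> k) - 2 * \<gamma> t * \<theta>"
proof -
  have t: "Suc t < hor P" using tT by simp
  let ?V = "Vf P \<theta> (Suc t)" and ?\<phi> = "\<lambda>j. phibar P \<theta> \<gamma> (Suc t) \<theta> (zg \<theta> j)"
  let ?p = "cell_prob (pspace P) (dem P t) \<theta>"
  have osc: "grid_osc_bound \<theta> ?V ?\<phi>"
    using grid_osc_bound_Vf[OF theta alpha(1) T2 Kpos ps Dmeas Cconv Ccoer gamma Vsum] t by blast
  obtain L where L: "-2 \<le> L" "\<And>m. L < m \<Longrightarrow> zg \<theta> k - zg \<theta> m < sv P \<theta> (Suc t)"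
    using grid_tail_index[OF theta] by blast
  have psi: "psibar P \<theta> \<gamma> t \<theta> (zg \<theta> k) = \<gamma> t * \<theta> + disc P * (\<Sum>j\<in>{-1..L}. ?\<phi> (k - j) * ?p j)"
    using psibar_as_finite_sum[OF theta t L] by (simp add: zg_diff fg_eq_cell_prob)
  have D: "dem P t \<in> borel_measurable (pspace P)" "\<And>\<omega>. \<omega> \<in> space (pspace P) \<Longrightarrow> 0 \<le> dem P t \<omega>"
    using Dmeas Dnonneg t by auto
  have int: "integrable (pspace P) (\<lambda>\<omega>. ?V (x - dem P t \<omega>))" using Vint t by fastforce
  have sum: "summable (\<lambda>m. ?V (x - zg \<theta> (int m - 1)) * ?p (int m - 1))"
    using Vsum t unfolding fg_eq_cell_prob by fastforce
  have "?V y = Hf P \<theta> (Suc t) (Sv P \<theta> (Suc t)) + setupK P (Suc t)" if "y \<le> x - zg \<theta> (L + 1)" for y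
    using that xk(2) L(2)[of "L + 1"] by (intro Vf_below) simp
  from prob_space.expectation_minus_grid_series_le
      [OF ps D theta int sum L(1) this osc less_imp_le[OF xk(1)] xk(2)]
  have "Af P \<theta> (Suc t) x \<le> (\<Sum>j\<in>{-1..L}. 2 * ?\<phi> (k - j) * ?p j)"
    unfolding Af_def fg_eq_cell_prob by simp
  then have "disc P * Af P \<theta> (Suc t) x \<le> disc P * (2 * (\<Sum>j\<in>{-1..L}. ?\<phi> (k - j) * ?p j))"
    using alpha(1) by (simp add: sum_distrib_left[symmetric] mult.assoc)
  then show ?thesis unfolding psi by (simp add: algebra_simps)
qed

end
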